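(* Let $(\mathcal{P},d)$ be a tree metric given by the weighted tree $T$, let $G$ be any directed network on $\mathcal{P}$ (arc $(x,y)$ of length $d(x,y)$), and let $u\neq v$ be in $\mathcal{P}$. Then every node other than $u$ on any greedy path from $u$ to $v$ in $G$ lies in the connected component of $T-u$ that contains $v$.
   Context: A tree metric on a finite set $\mathcal{P}$ is given by a spanning tree $T$ on vertex set $\mathcal{P}$ with positive edge weights; $d(x,y)=d_T(x,y)$ is the total weight of the unique $x$–$y$ path in $T$. $T-u$ is the forest obtained by deleting $u$ (its components are the subtrees hanging below $u$ when $T$ is rooted at $u$). A greedy path from $u$ to $v$ in $G$ is a directed path $u=x_1,\dots,x_j=v$ of arcs of $G$ with $d(x_i,v)>d(x_{i+1},v)$ for all $i$. *)

theory Defs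
  imports Main "HOL-Library.Cardinality" Complex_Main
begin

definition is_walk :: "('a \<Rightarrow> 'a \<Rightarrow> bool) \<Rightarrow> 'a list \<Rightarrow> bool" where
  "is_walk E xs \<longleftrightarrow> xs \<noteq> [] \<and> (\<forall>i. Suc i < length xs \<longrightarrow> E (xs ! i) (xs ! Suc i))"

definition is_path :: "('a \<Rightarrow> 'a \<Rightarrow> bool) \<Rightarrow> 'a list \<Rightarrow> 'a \<Rightarrow> 'a \<Rightarrow> bool" where
  "is_path E xs x y \<longleftrightarrow> is_walk E xs \<and> distinct xs \<and> hd xs = x \<and> last xs = y"

definition is_cycle :: "('a \<Rightarrow> 'a \<Rightarrow> bool) \<Rightarrow> 'a list \<Rightarrow> bool" where
  "is_cycle E xs \<longleftrightarrow> length xs \<ge> 3 \<and> is_walk E xs \<and> distinct xs \<and> E (last xs) (hd xs)"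

definition is_tree :: "'a set \<Rightarrow> ('a \<Rightarrow> 'a \<Rightarrow> bool) \<Rightarrow> bool" where
  "is_tree P E \<longleftrightarrow> finite P \<and> P \<noteq> {}
     \<and> (\<forall>x y. E x y \<longrightarrow> x \<in> P \<and> y \<in> P \<and> x \<noteq> y \<and> E y x)
     \<and> (\<forall>x\<in>P. \<forall>y\<in>P. \<exists>xs. is_path E xs x y)
     \<and> \<not> (\<exists>xs. is_cycle E xs)"

definition pos_weights :: "('a \<Rightarrow> 'a \<Rightarrow> bool) \<Rightarrow> ('a \<Rightarrow> 'a \<Rightarrow> real) \<Rightarrow> bool" where
  "pos_weights E w \<longleftrightarrow> (\<forall>x y. E x y \<longrightarrow> w x y > 0 \<and> w x y = w y x)"

definition walk_weight :: "('a \<Rightarrow> 'a \<Rightarrow> real) \<Rightarrow> 'a list \<Rightarrow> real" where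
  "walk_weight w xs = (\<Sum>i<length xs - 1. w (xs ! i) (xs ! Suc i))"

(* tree metric: total weight of the unique x-y path in T *)
definition tree_dist :: "('a \<Rightarrow> 'a \<Rightarrow> bool) \<Rightarrow> ('a \<Rightarrow> 'a \<Rightarrow> real) \<Rightarrow> 'a \<Rightarrow> 'a \<Rightarrow> real" where
  "tree_dist E w x y = walk_weight w (THE xs. is_path E xs x y)"

definition del_vertex :: "('a \<Rightarrow> 'a \<Rightarrow> bool) \<Rightarrow> 'a \<Rightarrow> 'a \<Rightarrow> 'a \<Rightarrow> bool" where
  "del_vertex E u = (\<lambda>x y. E x y \<and> x \<noteq> u \<and> y \<noteq> u)"

definition component_del :: "'a set \<Rightarrow> ('a \<Rightarrow> 'a \<Rightarrow> bool) \<Rightarrow> 'a \<Rightarrow> 'a \<Rightarrow> 'a set" where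
  "component_del P E u v = {z \<in> P - {u}. \<exists>xs. is_path (del_vertex E u) xs v z}"

definition greedy_path :: "('a \<times> 'a) set \<Rightarrow> ('a \<Rightarrow> 'a \<Rightarrow> real) \<Rightarrow> 'a list \<Rightarrow> 'a \<Rightarrow> 'a \<Rightarrow> bool" where
  "greedy_path A d xs u v \<longleftrightarrow> xs \<noteq> [] \<and> hd xs = u \<and> last xs = v
     \<and> (\<forall>i. Suc i < length xs \<longrightarrow> (xs ! i, xs ! Suc i) \<in> A \<and> d (xs ! i) v > d (xs ! Suc i) v)"

end

theory Submission
  imports Defs
begin

text \<open>
  Since T has no cycles, the path from a vertex z to v is unique, so d(z,v) is the weight of
  any z-v path in T. If z lies outside the component of T - u containing v, then every z-v path
  passes through u, whence d(z,v) = d(z,u) + d(u,v) \<ge> d(u,v). Along a greedy path the distance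
  to v strictly decreases, so every vertex after u is strictly closer to v than u and therefore
  lies in that component.
\<close>

lemma is_walk_iff_successively: "is_walk E xs \<longleftrightarrow> xs \<noteq> [] \<and> successively E xs"
  by (simp add: is_walk_def successively_conv_nth)

lemma is_path_iff_successively:
  "is_path E xs x y \<longleftrightarrow> xs \<noteq> [] \<and> successively E xs \<and> distinct xs \<and> hd xs = x \<and> last xs = y"
  by (auto simp: is_path_def is_walk_iff_successively)

lemma successively_join:
  "successively P (xs @ [c]) \<Longrightarrow> successively P (c # ys) \<Longrightarrow> successively P (xs @ c # ys)"
  by (induction xs rule: induct_list012) auto

lemma successively_split:
  assumes "successively P (xs @ c # ys)"
  shows "successively P (xs @ [c])" and "successively P (c # ys)"
  using assms successively_append_iff[of P xs "c # ys"] successively_append_iff[of P "xs @ [c]" ys]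
  by (auto simp: successively_Cons)

lemma is_cycle_join_paths:
  assumes sym: "\<And>a b. E a b \<Longrightarrow> E b a"
    and p: "successively E (x # p1 @ [c])" and q: "successively E (x # q1 @ [c])"
    and dist: "distinct (x # p1 @ c # q1)" and nontriv: "p1 \<noteq> [] \<or> q1 \<noteq> []"
  shows "is_cycle E (x # p1 @ c # rev q1)"
proof -
  let ?C = "x # p1 @ c # rev q1"
  have "successively (\<lambda>a b. E b a) (x # q1 @ [c])"
    using q by (rule successively_mono) (simp add: sym)
  then have "successively E (rev (x # q1 @ [c]))"
    by (simp only: successively_rev)
  then have "successively E (c # rev q1 @ [x])"
    by simp
  with p have "successively E (?C @ [x])"
    using successively_join[of E "x # p1" c "rev q1 @ [x]"] by simp
  then have "successively E ?C" and "E (last ?C) (hd ?C)"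
    using successively_append_iff[of E ?C "[x]"] by auto
  moreover have "length ?C \<ge> 3"
    using nontriv by (cases p1; cases q1) auto
  moreover have "distinct ?C"
    using dist by auto
  ultimately show ?thesis
    by (simp add: is_cycle_def is_walk_iff_successively)
qed

lemma path_unique_if_acyclic:
  assumes sym: "\<And>a b. E a b \<Longrightarrow> E b a" and acyclic: "\<not> (\<exists>c. is_cycle E c)"
    and "is_path E p x y" and "is_path E q x y"
  shows "p = q"
  using assms(3,4)
proof (induction "length p + length q" arbitrary: p q x rule: less_induct)
  case less
  obtain p' q' where p: "p = x # p'" and q: "q = x # q'"
    using less.prems by (cases p; cases q) (auto simp: is_path_iff_successively)
  show ?case
  proof (cases "p' = [] \<or> q' = []")
    case True
    with less.prems p q show ?thesis
      by (auto simp: is_path_def) (metis last_in_set)+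
  next
    case False
    have p': "is_path E p' (hd p') y" and q': "is_path E q' (hd q') y"
      using less.prems p q False by (auto simp: is_path_iff_successively successively_Cons)
    show ?thesis
    proof (cases "hd p' = hd q'")
      case True
      with less.hyps[of p' q' "hd p'"] p' q' p q show ?thesis
        by auto
    next
      case False
      text \<open>Follow q' up to its first vertex c on p'; the two detours from x to c close a cycle.\<close>
      have "y \<in> set p'" "y \<in> set q'"
        using p' q' unfolding is_path_iff_successively by (metis last_in_set)+
      then obtain q1 c q2 where q'_split: "q' = q1 @ c # q2" and "c \<in> set p'"
        and q1_off_p': "\<forall>t\<in>set q1. t \<notin> set p'"
        using split_list_first_prop[of q' "\<lambda>t. t \<in> set p'"] by blast
      then obtain p1 p2 where p'_split: "p' = p1 @ c # p2"
        by (meson split_list)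
      have "successively E (x # p1 @ [c])" and "successively E (x # q1 @ [c])"
        using less.prems p q p'_split q'_split successively_split(1)[of E "x # p1" c p2]
          successively_split(1)[of E "x # q1" c q2]
        by (auto simp: is_path_iff_successively)
      moreover have "distinct (x # p1 @ c # q1)"
        using less.prems p q p'_split q'_split q1_off_p' by (auto simp: is_path_def)
      moreover have "p1 \<noteq> [] \<or> q1 \<noteq> []"
        using False p'_split q'_split by auto
      ultimately have "is_cycle E (x # p1 @ c # rev q1)"
        using sym by (rule is_cycle_join_paths[rotated 1])
      with acyclic show ?thesis
        by blast
    qed
  qed
qed

lemma tree_dist_eq_walk_weight:
  assumes "is_tree P E" and "is_path E p x y"
  shows "tree_dist E w x y = walk_weight w p"
proof -
  have "(THE xs. is_path E xs x y) = p"
    using assms path_unique_if_acyclic[of E] by (auto simp: is_tree_def)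
  then show ?thesis
    by (simp add: tree_dist_def)
qed

lemma walk_weight_singleton: "walk_weight w [a] = 0"
  by (simp add: walk_weight_def)

lemma walk_weight_Cons_Cons:
  "walk_weight w (a # b # xs) = w a b + walk_weight w (b # xs)"
  by (simp add: walk_weight_def sum.lessThan_Suc_shift del: sum.lessThan_Suc)

lemma walk_weight_append_join:
  "walk_weight w (xs @ y # ys) = walk_weight w (xs @ [y]) + walk_weight w (y # ys)"
  by (induction xs rule: induct_list012) (simp_all add: walk_weight_Cons_Cons walk_weight_singleton)

lemma walk_weight_nonneg:
  assumes "pos_weights E w" and "successively E xs"
  shows "walk_weight w xs \<ge> 0"
  using assms(2)
proof (induction xs rule: induct_list012)
  case (3 a b zs)
  then have "w a b > 0"
    using assms(1) by (simp add: pos_weights_def)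
  with 3 show ?case
    by (simp add: walk_weight_Cons_Cons)
qed (simp_all add: walk_weight_def walk_weight_singleton)

lemma path_through_deleted_vertex:
  assumes sym: "\<And>a b. E a b \<Longrightarrow> E b a"
    and "is_path E p z v" and "z \<in> P - {u}" and "z \<notin> component_del P E u v"
  shows "u \<in> set p"
proof (rule ccontr)
  assume "u \<notin> set p"
  then have "successively (\<lambda>a b. del_vertex E u b a) p"
    using assms(2) sym by (auto simp: is_path_iff_successively del_vertex_def
        elim!: successively_mono)
  then have "is_path (del_vertex E u) (rev p) v z"
    using assms(2) by (auto simp: is_path_iff_successively hd_rev last_rev)
  with assms(3,4) show False
    by (auto simp: component_del_def)
qed

lemma tree_dist_ge_outside_component:
  assumes T: "is_tree P E" and "pos_weights E w"
    and "v \<in> P" and z: "z \<in> P - {u}" and outside: "z \<notin> component_del P E u v"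
  shows "tree_dist E w u v \<le> tree_dist E w z v"
proof -
  have sym: "\<And>a b. E a b \<Longrightarrow> E b a"
    using T by (auto simp: is_tree_def)
  have "\<exists>p. is_path E p z v"
    using T z \<open>v \<in> P\<close> by (simp add: is_tree_def)
  then obtain p where p: "is_path E p z v"
    by blast
  have "u \<in> set p"
    by (rule path_through_deleted_vertex[OF sym p z outside])
  then obtain p1 p2 where p_split: "p = p1 @ u # p2"
    by (meson split_list)
  have p1: "successively E (p1 @ [u])" and "successively E (u # p2)"
    using p p_split successively_split by (auto simp: is_path_iff_successively)
  then have "is_path E (u # p2) u v"
    using p p_split by (auto simp: is_path_iff_successively)
  then have "tree_dist E w z v = walk_weight w (p1 @ [u]) + tree_dist E w u v"
    using tree_dist_eq_walk_weight[OF T] p p_split walk_weight_append_join by metis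
  with walk_weight_nonneg[OF \<open>pos_weights E w\<close> p1] show ?thesis
    by linarith
qed

lemma greedy_path_later_vertex:
  assumes greedy: "greedy_path A d xs u v" and "z \<in> set xs" and "z \<noteq> u"
  shows "z \<in> snd ` A" and "d z v < d u v"
proof -
  have x0: "xs ! 0 = u"
    using greedy by (metis greedy_path_def hd_conv_nth)
  have later: "xs ! Suc j \<in> snd ` A \<and> d (xs ! Suc j) v < d u v" if "Suc j < length xs" for j
    using that
  proof (induction j)
    case 0
    then show ?case
      using greedy x0 by (force simp: greedy_path_def)
  next
    case (Suc j)
    then show ?case
      using greedy by (force simp: greedy_path_def)
  qed
  obtain i where "i < length xs" "xs ! i = z"
    using \<open>z \<in> set xs\<close> by (meson in_set_conv_nth)
  moreover from this obtain j where "i = Suc j"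
    using \<open>z \<noteq> u\<close> x0 by (cases i) auto
  ultimately show "z \<in> snd ` A" and "d z v < d u v"
    using later by auto
qed

theorem lemma3p1:
  fixes P :: "'a set" and E :: "'a \<Rightarrow> 'a \<Rightarrow> bool" and w :: "'a \<Rightarrow> 'a \<Rightarrow> real"
    and A :: "('a \<times> 'a) set" and u v :: 'a and xs :: "'a list"
  assumes "is_tree P E" and "pos_weights E w"
    and "A \<subseteq> P \<times> P"
    and "u \<in> P" and "v \<in> P" and "u \<noteq> v"
    and "greedy_path A (tree_dist E w) xs u v"
  shows "\<forall>z \<in> set xs. z \<noteq> u \<longrightarrow> z \<in> component_del P E u v"
proof (intro ballI impI)
  fix z assume "z \<in> set xs" and "z \<noteq> u"
  then have "z \<in> snd ` A" and closer: "tree_dist E w z v < tree_dist E w u v"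
    using greedy_path_later_vertex[OF assms(7)] by auto
  with assms(3) have "z \<in> P - {u}"
    using \<open>z \<noteq> u\<close> by auto
  with closer show "z \<in> component_del P E u v"
    using tree_dist_ge_outside_component[OF assms(1,2,5)] by fastforce
qed

end
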